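(* Let $s$ be a continuous proper scoring rule with convex exposure on an $n$-outcome forecast domain $\mathcal{D}$, with exposure function $\mathbf{g}$, and fix $\mathbf{p}_1,\dots,\mathbf{p}_m\in\mathcal{D}$. For a weight vector $\mathbf{w}=(w_1,\dots,w_m)\in\Delta^m$ and $j\in[n]$ define the weight-score \[\mathrm{WS}_j(\mathbf{w}):=s(\mathbf{p}^*_{\mathbf{w}};j),\] where $\mathbf{p}^*_{\mathbf{w}}$ is the quasi-arithmetic pool of $(\mathbf{p}_i,w_i)_{i=1}^m$ with respect to $\mathbf{g}$. Then for every $j\in[n]$, $\mathrm{WS}_j$ is a concave function of $\mathbf{w}$ on $\Delta^m$.
   Context: $\Delta^k$ is the standard simplex in $\mathbb{R}^k$ (probability vectors); $\delta_j$ is the $j$-th standard basis vector. An $n$-outcome forecast domain is a convex $(n-1)$-dimensional subset of $\Delta^n$. A proper scoring rule on $\mathcal{D}$ is $s:\mathcal{D}\times[n]\to\mathbb{R}$ with $\sum_j p(j)s(\mathbf{p};j)\ge\sum_j p(j)s(\mathbf{x};j)$ for all $\mathbf{p},\mathbf{x}\in\mathcal{D}$, equality only if $\mathbf{x}=\mathbf{p}$. $G(\mathbf{p}):=\sum_j p(j)s(\mathbf{p};j)$ is differentiable and strictly convex, $\mathbf{g}=\nabla G$ (values modulo translation by the all-ones vector), and $s(\mathbf{p};j)=G(\mathbf{p})+\langle\mathbf{g}(\mathbf{p}),\delta_j-\mathbf{p}\rangle$. Convex exposure: the range of $\mathbf{g}$ is convex. The QA pool with weights $\mathbf{w}$ is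 the unique $\mathbf{p}^*_{\mathbf{w}}\in\mathcal{D}$ with $\mathbf{g}(\mathbf{p}^*_{\mathbf{w}})=\sum_i w_i\mathbf{g}(\mathbf{p}_i)$ (modulo the all-ones vector). *)

theory Defs
  imports "HOL-Analysis.Analysis"
begin

definition prob_simplex :: "(real ^ 'k) set" where
  "prob_simplex = {p. (\<forall>i. 0 \<le> p $ i) \<and> (\<Sum>i\<in>UNIV. p $ i) = 1}"

definition ones :: "real ^ 'k" where
  "ones = (\<chi> i. 1)"

definition delta :: "'k \<Rightarrow> real ^ 'k" where
  "delta j = (\<chi> i. if i = j then 1 else 0)"

definition forecast_domain :: "(real ^ 'n) set \<Rightarrow> bool" where
  "forecast_domain D \<longleftrightarrow> D \<subseteq> prob_simplex \<and> convex D \<and> aff_dim D = int CARD('n) - 1"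

definition proper_scoring_rule :: "(real ^ 'n) set \<Rightarrow> (real ^ 'n \<Rightarrow> 'n \<Rightarrow> real) \<Rightarrow> bool" where
  "proper_scoring_rule D s \<longleftrightarrow>
     (\<forall>p\<in>D. \<forall>x\<in>D. (\<Sum>j\<in>UNIV. p $ j * s p j) \<ge> (\<Sum>j\<in>UNIV. p $ j * s x j)
        \<and> ((\<Sum>j\<in>UNIV. p $ j * s p j) = (\<Sum>j\<in>UNIV. p $ j * s x j) \<longrightarrow> x = p))"

definition expected_score :: "(real ^ 'n \<Rightarrow> 'n \<Rightarrow> real) \<Rightarrow> real ^ 'n \<Rightarrow> real" where
  "expected_score s p = (\<Sum>j\<in>UNIV. p $ j * s p j)"

text \<open>g is an exposure function of s on D: g is the gradient of G (as a derivative within D,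
  so it is only determined modulo the all-ones vector), and s(p;j) = G(p) + <g(p), delta_j - p>.\<close>
definition exposure_function ::
  "(real ^ 'n) set \<Rightarrow> (real ^ 'n \<Rightarrow> 'n \<Rightarrow> real) \<Rightarrow> (real ^ 'n \<Rightarrow> real ^ 'n) \<Rightarrow> bool" where
  "exposure_function D s g \<longleftrightarrow>
     (\<forall>p\<in>D. (expected_score s has_derivative (\<lambda>v. g p \<bullet> v)) (at p within D)) \<and>
     (\<forall>p\<in>D. \<forall>j. s p j = expected_score s p + g p \<bullet> (delta j - p))"

definition convex_exposure :: "(real ^ 'n) set \<Rightarrow> (real ^ 'n \<Rightarrow> real ^ 'n) \<Rightarrow> bool" where
  "convex_exposure D g \<longleftrightarrow> convex {g p + c *\<^sub>R ones | p c. p \<in> D}"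

definition qa_pool ::
  "(real ^ 'n) set \<Rightarrow> (real ^ 'n \<Rightarrow> real ^ 'n) \<Rightarrow> ('m \<Rightarrow> real ^ 'n) \<Rightarrow> real ^ 'm \<Rightarrow> real ^ 'n" where
  "qa_pool D g P w = (THE q. q \<in> D \<and> (\<exists>c. g q = (\<Sum>i\<in>UNIV. w $ i *\<^sub>R g (P i)) + c *\<^sub>R ones))"

end

theory Submission
  imports Defs
begin

text \<open>Write \<open>G\<close> for the expected score. If \<open>g(q) = t + c\<one>\<close> with \<open>q \<in> D\<close>, properness makes \<open>q\<close>
  the unique maximiser of \<open>\<langle>t, p\<rangle> - G(p)\<close> over \<open>p \<in> D\<close>. With the exposure formula this says
  that \<open>s(q; j)\<close> is the minimum over \<open>p \<in> D\<close> of the affine expression \<open>\<langle>t, \<delta>\<^sub>j - p\<rangle> + G(p)\<close>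
  in \<open>t\<close>, attained at \<open>p = q\<close>. For the QA pool one may take \<open>t = \<Sum>\<^sub>i w\<^sub>i g(p\<^sub>i)\<close>, which is
  linear in \<open>w\<close>; so \<open>WS\<^sub>j\<close> is a pointwise minimum of affine functions of \<open>w\<close>, hence concave.\<close>

lemma prob_simplex_sum: "x \<in> prob_simplex \<Longrightarrow> (\<Sum>i\<in>UNIV. x $ i) = 1"
  by (simp add: prob_simplex_def)

lemma convex_prob_simplex: "convex (prob_simplex :: (real ^ 'k) set)"
  unfolding convex_def prob_simplex_def
  by (auto simp: sum.distrib sum_distrib_left[symmetric])

lemma inner_delta: "v \<bullet> delta j = v $ j"
  unfolding inner_vec_def delta_def by (simp add: if_distrib cong: if_cong)

lemma delta_in_prob_simplex: "delta j \<in> prob_simplex"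
  by (simp add: prob_simplex_def delta_def)

lemma inner_ones_prob_simplex: "x \<in> prob_simplex \<Longrightarrow> ones \<bullet> x = 1"
  unfolding inner_vec_def ones_def by (simp add: prob_simplex_sum)

lemma inner_add_ones_diff_prob_simplex:
  assumes "p \<in> prob_simplex" and "x \<in> prob_simplex"
  shows "(t + c *\<^sub>R ones) \<bullet> (p - x) = t \<bullet> (p - x)"
  using assms by (simp add: inner_add_left inner_diff_right inner_ones_prob_simplex)

lemma expectation_affine_in_delta:
  assumes "p \<in> prob_simplex"
  shows "(\<Sum>j\<in>UNIV. p $ j * (a + v \<bullet> (delta j - x))) = a + v \<bullet> (p - x)"
proof -
  have "(\<Sum>j\<in>UNIV. p $ j * (a + v \<bullet> (delta j - x)))
      = (\<Sum>j\<in>UNIV. p $ j) * a + (\<Sum>j\<in>UNIV. p $ j * v $ j) - (\<Sum>j\<in>UNIV. p $ j) * (v \<bullet> x)"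
    by (simp add: inner_diff_right inner_delta algebra_simps sum.distrib sum_subtractf
        sum_distrib_left sum_distrib_right)
  also have "\<dots> = a + v \<bullet> p - v \<bullet> x"
    using prob_simplex_sum[OF assms] by (simp add: inner_vec_def mult.commute)
  finally show ?thesis
    by (simp add: inner_diff_right)
qed

lemma concave_on_linear:
  fixes f :: "'a::real_vector \<Rightarrow> real"
  assumes "linear f" and "convex S"
  shows "concave_on S f"
  using assms by (simp add: concave_on_iff linear_add linear_scale)

lemma concave_on_attained_min:
  assumes "convex S"
    and "\<And>q. q \<in> Q \<Longrightarrow> concave_on S (A q)"
    and "\<And>w q. w \<in> S \<Longrightarrow> q \<in> Q \<Longrightarrow> f w \<le> A q w"
    and "\<And>w. w \<in> S \<Longrightarrow> \<exists>q\<in>Q. f w = A q w"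
  shows "concave_on S f"
  unfolding concave_on_iff
proof (intro conjI ballI allI impI)
  fix u v :: 'a and a b :: real
  assume uv: "u \<in> S" "v \<in> S" and ab: "0 \<le> a" "0 \<le> b" "a + b = 1"
  then have w: "a *\<^sub>R u + b *\<^sub>R v \<in> S"
    using \<open>convex S\<close> by (simp add: convex_def)
  then obtain q where q: "q \<in> Q" "f (a *\<^sub>R u + b *\<^sub>R v) = A q (a *\<^sub>R u + b *\<^sub>R v)"
    using assms(4) by blast
  have "a * f u + b * f v \<le> a * A q u + b * A q v"
    using assms(3)[OF _ q(1)] uv ab by (intro add_mono mult_left_mono) auto
  also have "\<dots> \<le> A q (a *\<^sub>R u + b *\<^sub>R v)"
    using assms(2)[OF q(1)] uv ab by (simp add: concave_on_iff)
  finally show "a * f u + b * f v \<le> f (a *\<^sub>R u + b *\<^sub>R v)"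
    using q(2) by simp
qed (fact \<open>convex S\<close>)

locale exposed_scoring_rule =
  fixes D :: "(real ^ 'n) set"
    and s :: "real ^ 'n \<Rightarrow> 'n \<Rightarrow> real"
    and g :: "real ^ 'n \<Rightarrow> real ^ 'n"
  assumes domain_subset: "D \<subseteq> prob_simplex"
    and proper: "proper_scoring_rule D s"
    and exposure: "exposure_function D s g"
begin

lemma score_eq: "x \<in> D \<Longrightarrow> s x j = expected_score s x + g x \<bullet> (delta j - x)"
  using exposure by (simp add: exposure_function_def)

lemma expected_score_of_report:
  assumes "p \<in> D" and "x \<in> D"
  shows "(\<Sum>j\<in>UNIV. p $ j * s x j) = expected_score s x + g x \<bullet> (p - x)"
  using assms domain_subset by (auto simp: score_eq intro: expectation_affine_in_delta)

lemma expected_score_above_tangent: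
  assumes "p \<in> D" and "x \<in> D" and "p \<noteq> x"
  shows "expected_score s x + g x \<bullet> (p - x) < expected_score s p"
proof -
  have "(\<Sum>j\<in>UNIV. p $ j * s x j) \<le> expected_score s p \<and>
      (expected_score s p = (\<Sum>j\<in>UNIV. p $ j * s x j) \<longrightarrow> x = p)"
    using proper assms(1,2) unfolding proper_scoring_rule_def expected_score_def by blast
  then show ?thesis
    using assms(3) expected_score_of_report[OF assms(1,2)] by auto
qed

lemma exposure_unique_argmax:
  assumes "x \<in> D" and "p \<in> D" and "p \<noteq> x" and "g x = t + c *\<^sub>R ones"
  shows "t \<bullet> p - expected_score s p < t \<bullet> x - expected_score s x"
proof -
  have "g x \<bullet> (p - x) = t \<bullet> (p - x)"
    using assms domain_subset by (auto intro: inner_add_ones_diff_prob_simplex)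
  then show ?thesis
    using expected_score_above_tangent[OF assms(2,1,3)] by (simp add: inner_diff_right)
qed

lemma score_eq_shifted_exposure:
  assumes "x \<in> D" and "g x = t + c *\<^sub>R ones"
  shows "s x j = t \<bullet> (delta j - x) + expected_score s x"
  using assms domain_subset delta_in_prob_simplex[of j]
  by (auto simp: score_eq inner_add_ones_diff_prob_simplex)

lemma score_le_shifted_exposure:
  assumes "x \<in> D" and "q \<in> D" and "g x = t + c *\<^sub>R ones"
  shows "s x j \<le> t \<bullet> (delta j - q) + expected_score s q"
proof -
  have "t \<bullet> q - expected_score s q \<le> t \<bullet> x - expected_score s x"
    using exposure_unique_argmax[OF assms(1,2) _ assms(3)] by (cases "q = x") auto
  then show ?thesis
    using score_eq_shifted_exposure[OF assms(1,3)] by (simp add: inner_diff_right)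
qed

lemma ex1_exposed:
  assumes "t \<in> {g p + c *\<^sub>R ones | p c. p \<in> D}"
  shows "\<exists>!q. q \<in> D \<and> (\<exists>c. g q = t + c *\<^sub>R ones)"
proof -
  obtain x c where x: "x \<in> D" "t = g x + c *\<^sub>R ones"
    using assms by blast
  then have "g x = t + (- c) *\<^sub>R ones"
    by simp
  moreover have "q = x" if "q \<in> D" "g q = t + c' *\<^sub>R ones" "g x = t + c'' *\<^sub>R ones" for q c' c''
    using exposure_unique_argmax[OF that(1) x(1) _ that(2)]
      exposure_unique_argmax[OF x(1) that(1) _ that(3)] by force
  ultimately show ?thesis
    using x(1) by blast
qed

lemma qa_pool_exposure:
  fixes P :: "'m::finite \<Rightarrow> real ^ 'n"
  assumes "convex_exposure D g" and "\<And>i. P i \<in> D" and "w \<in> prob_simplex"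
  shows "qa_pool D g P w \<in> D \<and> (\<exists>c. g (qa_pool D g P w) = (\<Sum>i\<in>UNIV. w $ i *\<^sub>R g (P i)) + c *\<^sub>R ones)"
proof -
  have "g (P i) \<in> {g p + c *\<^sub>R ones | p c. p \<in> D}" for i
    using assms(2) by (metis (mono_tags, lifting) add.right_neutral mem_Collect_eq scale_zero_left)
  then have "(\<Sum>i\<in>UNIV. w $ i *\<^sub>R g (P i)) \<in> {g p + c *\<^sub>R ones | p c. p \<in> D}"
    using assms(1,3) unfolding convex_exposure_def
    by (intro convex_sum) (auto simp: prob_simplex_def)
  then show ?thesis
    unfolding qa_pool_def by (rule theI'[OF ex1_exposed])
qed

end

theorem theorem5p1:
  fixes D :: "(real ^ 'n) set"
    and s :: "real ^ 'n \<Rightarrow> 'n \<Rightarrow> real"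
    and g :: "real ^ 'n \<Rightarrow> real ^ 'n"
    and P :: "'m::finite \<Rightarrow> real ^ 'n"
  assumes "forecast_domain D"
    and "proper_scoring_rule D s"
    and "\<forall>j. continuous_on D (\<lambda>p. s p j)"
    and "exposure_function D s g"
    and "convex_exposure D g"
    and "\<forall>i. P i \<in> D"
  shows "\<forall>j. concave_on prob_simplex (\<lambda>w :: real ^ 'm. s (qa_pool D g P w) j)"
proof
  fix j
  interpret exposed_scoring_rule D s g
    using assms(1,2,4) by unfold_locales (simp_all add: forecast_domain_def)
  define T where "T w = (\<Sum>i\<in>UNIV. w $ i *\<^sub>R g (P i))" for w :: "real ^ 'm"
  have pool: "qa_pool D g P w \<in> D \<and> (\<exists>c. g (qa_pool D g P w) = T w + c *\<^sub>R ones)"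
    if "w \<in> prob_simplex" for w
    using qa_pool_exposure[OF assms(5) _ that] assms(6) by (simp add: T_def)
  have "linear (\<lambda>w. T w \<bullet> v)" for v
    by (rule linearI) (simp_all add: T_def scaleR_add_left sum.distrib inner_add_left
        scaleR_sum_right inner_sum_left sum_distrib_left mult.assoc)
  then have affine: "concave_on prob_simplex (\<lambda>w. T w \<bullet> (delta j - q) + expected_score s q)" for q
    by (intro concave_on_add concave_on_linear convex_prob_simplex concave_on_const[THEN iffD2])
  show "concave_on prob_simplex (\<lambda>w. s (qa_pool D g P w) j)"
  proof (rule concave_on_attained_min[OF convex_prob_simplex affine, where Q = D])
    fix w :: "real ^ 'm" and q
    assume "w \<in> prob_simplex" and "q \<in> D"
    then show "s (qa_pool D g P w) j \<le> T w \<bullet> (delta j - q) + expected_score s q"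
      using pool by (blast intro: score_le_shifted_exposure)
  next
    fix w :: "real ^ 'm"
    assume "w \<in> prob_simplex"
    then show "\<exists>q\<in>D. s (qa_pool D g P w) j = T w \<bullet> (delta j - q) + expected_score s q"
      using pool by (blast intro: score_eq_shifted_exposure)
  qed
qed

end
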